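(* Let $L$ be a subspace of $\bigwedge^{k}V$ and let $I\subseteq[n]$. There is no infinite sequence of subspaces $L_0=L,L_1,L_2,\dots$ such that for each $s\ge 0$ there are $i_s<j_s$ in $I$ with $L_{s+1}=N_{j_s\to i_s}L_s$ and $L_{s+1}\neq L_s$. Equivalently, the procedure "while there is a pair $i<j$ in $I$ with $N_{j\to i}L\neq L$, replace $L$ by $N_{j\to i}L$" terminates for every choice of such non-fixing slow shifts.
   Context: $\mathbb{F}$ is a field (assumed throughout the paper, for expository purposes, to have characteristic not $2$), $V$ is an $n$-dimensional $\mathbb{F}$-vector space with a fixed basis $e_1,\dots,e_n$, and $\bigwedge V=\bigoplus_k\bigwedge^kV$ is its exterior algebra, with $\bigwedge^kV$ having the monomial basis $e_S=e_{s_1}\wedge\cdots\wedge e_{s_k}$, $S=\{s_1<\cdots<s_k\}\subseteq[n]$. For $j\in[n]$, $V^{(j)}$ is the span of $\{e_h:h\neq j\}$, and $\bigwedge V^{(j)}$ is viewed as a subalgebra of $\bigwedge V$. Slow shift: for distinct $i,j\in[n]$ and nonzero $m\in\bigwedge^kV$, write uniquely $m=x+e_j\wedge y$ with $x\in\bigwedge^kV^{(j)}$, $y\in\bigwedge^{k-1}V^{(j)}$, and set $N_{j\to i}m=x+e_i\wedge y$ if this is nonzero, and $N_{j\to i}m=e_j\wedge y$ otherwise (this is, up to scalar, the limit as $t\to 0$ of the action on $\mathbb{P}(\bigwedge^kV)$ of the linear map sending $e_j\mapsto e_i+te_j$ and fixing the other $e_h$, obtained by evaluating at $t=0$ the representative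 with polynomial coefficients having no common factor of positive $t$-degree). For a subspace $L$ of $\bigwedge^kV$, $N_{j\to i}L$ is the span of $\{N_{j\to i}m: m\in L\setminus\{0\}\}$; it has the same dimension as $L$. *)

theory Defs
  imports Complex_Main "HOL-Library.Function_Algebras"
begin

text \<open>Elements of the k-th exterior power of V = F^n (basis e_1..e_n) are represented by
  their coefficient functions on index sets S: m S is the coefficient of the monomial e_S
  (S = {s_1 < ... < s_k}).\<close>

definition wscale :: "'a::field \<Rightarrow> (nat set \<Rightarrow> 'a) \<Rightarrow> (nat set \<Rightarrow> 'a)" where
  "wscale c f = (\<lambda>S. c * f S)"

definition wedge_space :: "nat \<Rightarrow> nat \<Rightarrow> (nat set \<Rightarrow> 'a::field) set" where
  "wedge_space n k = {m. \<forall>S. m S \<noteq> 0 \<longrightarrow> S \<subseteq> {1..n} \<and> card S = k}"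

text \<open>Sign of e_i wedge e_T = wsign i T * e_(insert i T), for i not in T.\<close>
definition wsign :: "nat \<Rightarrow> nat set \<Rightarrow> 'a::field" where
  "wsign i T = (-1) ^ card {t\<in>T. t < i}"

text \<open>Slow shift N_{j->i} of a single element m = x + e_j wedge y.
  The coefficient of x + e_i wedge y at S: zero if j in S, otherwise
  m S + [i in S] * sign(e_i wedge e_(S-{i})) * y_(S-{i}), where
  y_T = sign(e_j wedge e_T) * m(insert j T). The fallback e_j wedge y = m restricted to sets containing j.\<close>
definition slow_shift_elt :: "nat \<Rightarrow> nat \<Rightarrow> (nat set \<Rightarrow> 'a::field) \<Rightarrow> (nat set \<Rightarrow> 'a)" where
  "slow_shift_elt j i m =
    (let z = (\<lambda>S. if j \<in> S then 0
                  else m S + (if i \<in> S then wsign i (S - {i}) * wsign j (S - {i}) * m (insert j (S - {i}))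
                              else 0))
     in if z \<noteq> (\<lambda>S. 0) then z else (\<lambda>S. if j \<in> S then m S else 0))"

definition slow_shift :: "nat \<Rightarrow> nat \<Rightarrow> (nat set \<Rightarrow> 'a::field) set \<Rightarrow> (nat set \<Rightarrow> 'a) set" where
  "slow_shift j i L = module.span wscale {slow_shift_elt j i m | m. m \<in> L \<and> m \<noteq> (\<lambda>S. 0)}"

end

theory Submission
  imports Defs
begin

text \<open>Let V_Q = span {e_S | Q S} and write F_h X = dim (X \<inter> V_{h \<notin> S}),
  D_h X = dim (X \<inter> V_{h \<in> S}). For i < j the slow shift N = N_{j->i} L satisfies
  dim (L \<inter> V_Q) \<le> dim (N \<inter> V_Q) whenever Q is closed under replacing j by i. Hence F_h (h \<noteq> i),
  D_h (h \<noteq> j) and F_i + F_j do not decrease, so \<Sum>_h h F_h does not decrease and grows if F_j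
  does; if F_j does not grow and N \<noteq> L, then D_j grows. So (\<Sum>_h h F_h, \<Sum>_h D_h) increases
  strictly in lexicographic order at every non-fixing shift, which cannot happen infinitely often
  because both entries are bounded by multiples of dim (\<And>^k V).\<close>

section \<open>Finitely spanned subsets of a vector space\<close>

text \<open>The space of coefficient functions is infinite-dimensional, so the library's
  \<open>finite_dimensional_vector_space\<close> does not apply. The \<open>local.\<close> prefixes distinguish \<open>span\<close>,
  \<open>dim\<close>, \<open>subspace\<close>, ... from the global constants for real vector spaces.\<close>

context vector_space
begin

definition finite_dim :: "'b set \<Rightarrow> bool" where
  "finite_dim X \<longleftrightarrow> (\<exists>B. finite B \<and> X \<subseteq> local.span B)"

lemma finite_dim_subset: "local.finite_dim B \<Longrightarrow> A \<subseteq> B \<Longrightarrow> local.finite_dim A"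
  unfolding finite_dim_def by blast

lemma finite_dim_Un:
  assumes "local.finite_dim A" "local.finite_dim B"
  shows "local.finite_dim (A \<union> B)"
proof -
  obtain C D where "finite C" "A \<subseteq> local.span C" "finite D" "B \<subseteq> local.span D"
    using assms unfolding finite_dim_def by blast
  moreover have "local.span C \<union> local.span D \<subseteq> local.span (C \<union> D)"
    by (simp add: local.span_mono)
  ultimately show ?thesis unfolding finite_dim_def by (intro exI[of _ "C \<union> D"]) auto
qed

lemma finite_dim_span: "local.finite_dim A \<Longrightarrow> local.finite_dim (local.span A)"
  unfolding finite_dim_def using local.span_minimal local.subspace_span by blast

lemma finite_dim_image:
  assumes "Vector_Spaces.linear scale scale g" "local.finite_dim A"
  shows "local.finite_dim (g ` A)"
proof -
  interpret g: Vector_Spaces.linear scale scale g by fact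
  obtain B where "finite B" "A \<subseteq> local.span B" using assms(2) unfolding finite_dim_def by blast
  then show ?thesis unfolding finite_dim_def using g.spans_image[of A B] by blast
qed

lemma finite_independent_subset_of_finite_dim:
  assumes "local.finite_dim A" "C \<subseteq> A" "local.independent C"
  shows "finite C"
proof -
  obtain B where "finite B" "A \<subseteq> local.span B" using assms(1) unfolding finite_dim_def by blast
  then show ?thesis using independent_span_bound assms(2,3) by blast
qed

lemma finite_dim_basis_extend:
  assumes "local.finite_dim A" "C \<subseteq> A" "local.independent C"
  obtains E where "C \<subseteq> E" "E \<subseteq> A" "local.independent E" "A \<subseteq> local.span E" "finite E"
    "card E = local.dim A"
proof -
  obtain E where E: "C \<subseteq> E" "E \<subseteq> A" "local.independent E" "A \<subseteq> local.span E"
    using maximal_independent_subset_extend assms(2,3) by blast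
  moreover have "finite E" using finite_independent_subset_of_finite_dim[OF assms(1) E(2,3)] .
  moreover have "card E = local.dim A" using basis_card_eq_dim[OF E(2,4,3)] .
  ultimately show ?thesis by (rule that)
qed

lemma finite_dim_basis:
  assumes "local.finite_dim A"
  obtains E where "E \<subseteq> A" "local.independent E" "A \<subseteq> local.span E" "finite E" "card E = local.dim A"
proof -
  obtain E where "{} \<subseteq> E" "E \<subseteq> A" "local.independent E" "A \<subseteq> local.span E" "finite E"
    "card E = local.dim A"
    by (rule finite_dim_basis_extend[OF assms empty_subsetI local.independent_empty])
  then show ?thesis using that by blast
qed

lemma dim_mono_finite_dim:
  assumes "A \<subseteq> B" "local.finite_dim B"
  shows "local.dim A \<le> local.dim B"
proof -
  obtain E where "E \<subseteq> B" "local.independent E" "B \<subseteq> local.span E" "finite E"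
    "card E = local.dim B"
    by (rule finite_dim_basis[OF assms(2)])
  then show ?thesis using dim_le_card[of A E] assms(1) by auto
qed

lemma subspace_eq_if_dim_le:
  assumes "local.subspace A" "A \<subseteq> B" "local.finite_dim B" "local.dim B \<le> local.dim A"
  shows "A = B"
proof -
  obtain C where C: "C \<subseteq> A" "local.independent C" "A \<subseteq> local.span C" "finite C"
    "card C = local.dim A"
    by (rule finite_dim_basis[OF finite_dim_subset[OF assms(3,2)]])
  have "C \<subseteq> B" using C(1) assms(2) by blast
  then obtain E where E: "C \<subseteq> E" "E \<subseteq> B" "local.independent E" "B \<subseteq> local.span E" "finite E"
    "card E = local.dim B"
    using finite_dim_basis_extend[OF assms(3) _ C(2)] by blast
  have "E = C" using card_seteq[OF E(5,1)] E(6) C(5) assms(4) by simp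
  then have "B \<subseteq> local.span C" using E(4) by simp
  also have "local.span C \<subseteq> A" using span_minimal[OF C(1) assms(1)] .
  finally show ?thesis using assms(2) by blast
qed

lemma in_disjoint_spans_eq_0:
  assumes "local.independent (R \<union> C)" "R \<inter> C = {}" "finite R" "finite C"
    and "x \<in> local.span R" "x \<in> local.span C"
  shows "x = 0"
proof -
  obtain u where u: "x = (\<Sum>v\<in>R. u v *s v)" using assms(5) span_finite[OF assms(3)] by auto
  obtain w where w: "x = (\<Sum>v\<in>C. w v *s v)" using assms(6) span_finite[OF assms(4)] by auto
  define c where "c v = (if v \<in> R then u v else - w v)" for v
  have "(\<Sum>v\<in>R \<union> C. c v *s v) = (\<Sum>v\<in>R. c v *s v) + (\<Sum>v\<in>C. c v *s v)"
    by (rule sum.union_disjoint[OF assms(3,4,2)])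
  also have "(\<Sum>v\<in>R. c v *s v) = x" unfolding u by (auto simp: c_def intro: sum.cong)
  also have "(\<Sum>v\<in>C. c v *s v) = - x"
    unfolding w using assms(2) by (auto simp: c_def sum_negf[symmetric] intro!: sum.cong)
  finally have "(\<Sum>v\<in>R \<union> C. c v *s v) = 0" by simp
  then have "\<forall>v\<in>R \<union> C. c v = 0"
    using assms(1,3,4) unfolding independent_explicit_finite_subsets by blast
  then have "\<forall>v\<in>R. u v = 0" unfolding c_def by (metis UnCI)
  then show ?thesis unfolding u by simp
qed

lemma inj_on_span_complement:
  assumes "Vector_Spaces.linear scale scale g" "local.independent E" "finite E" "C \<subseteq> E"
    and "local.span E \<inter> {x. g x = 0} \<subseteq> local.span C"
  shows "inj_on g (local.span (E - C))"
proof -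
  interpret g: Vector_Spaces.linear scale scale g by fact
  have "x = 0" if "x \<in> local.span (E - C)" "g x = 0" for x
  proof (rule in_disjoint_spans_eq_0)
    show "local.independent ((E - C) \<union> C)" "finite (E - C)" "finite C"
      using assms(2-4) finite_subset by (auto simp: Un_absorb2)
    have "local.span (E - C) \<subseteq> local.span E" by (simp add: local.span_mono)
    then show "x \<in> local.span C" using that assms(5) by blast
  qed (use that in auto)
  then show ?thesis by (intro g.inj_on_iff_eq_0[THEN iffD2]) auto
qed

lemma rank_nullity:
  assumes "Vector_Spaces.linear scale scale g" "local.subspace A" "local.finite_dim A"
  shows "local.dim A = local.dim (g ` A) + local.dim (A \<inter> {x. g x = 0})"
proof -
  interpret g: Vector_Spaces.linear scale scale g by fact
  let ?K = "A \<inter> {x. g x = 0}"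
  have "local.finite_dim ?K" by (rule finite_dim_subset[OF assms(3)]) blast
  then obtain C where C: "C \<subseteq> ?K" "local.independent C" "?K \<subseteq> local.span C" "finite C"
    "card C = local.dim ?K"
    by (rule finite_dim_basis)
  have "C \<subseteq> A" using C(1) by blast
  then obtain E where E: "C \<subseteq> E" "E \<subseteq> A" "local.independent E" "A \<subseteq> local.span E" "finite E"
    "card E = local.dim A"
    using finite_dim_basis_extend[OF assms(3) _ C(2)] by blast
  have span_E: "local.span E = A" by (rule local.span_subspace[OF E(2,4) assms(2)])
  have "g e \<in> local.span (g ` (E - C))" if "e \<in> E" for e
    using that C(1) local.span_zero by (cases "e \<in> C") (auto intro: local.span_base)
  then have "g ` E \<subseteq> local.span (g ` (E - C))" by blast
  moreover have "g ` (E - C) \<subseteq> local.span (g ` E)" by (auto intro: local.span_base)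
  ultimately have "local.span (g ` E) = local.span (g ` (E - C))"
    by (rule local.span_eq[THEN iffD2, OF conjI])
  then have image: "g ` A = local.span (g ` (E - C))" using g.span_image span_E by metis
  have inj: "inj_on g (local.span (E - C))"
    using C(3) span_E by (intro inj_on_span_complement[OF assms(1) E(3,5,1)]) auto
  have "local.dim (g ` A) = card (g ` (E - C))"
    unfolding image using local.independent_mono[OF E(3)]
    by (intro local.dim_span_eq_card_independent g.independent_injective_image inj) auto
  also have "\<dots> = card (E - C)" using card_image inj_on_subset[OF inj local.span_superset] by blast
  also have "\<dots> = card E - card C" by (rule card_Diff_subset[OF C(4) E(1)])
  finally show ?thesis using E(6) C(5) card_mono[OF E(5,1)] by linarith
qed

lemma dim_image_eq_of_trivial_kernel:
  assumes "Vector_Spaces.linear scale scale g" "local.subspace A" "local.finite_dim A"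
    and "A \<inter> {x. g x = 0} \<subseteq> {0}"
  shows "local.dim (g ` A) = local.dim A"
proof -
  interpret g: Vector_Spaces.linear scale scale g by fact
  have "A \<inter> {x. g x = 0} = local.span {}"
    using assms(4) local.subspace_0[OF assms(2)] by auto
  then show ?thesis
    using rank_nullity[OF assms(1-3)] local.dim_span_eq_card_independent[OF local.independent_empty]
    by simp
qed

end

section \<open>Coordinate subspaces and the linear pieces of a slow shift\<close>

interpretation vs: vector_space "wscale :: 'a::field \<Rightarrow> (nat set \<Rightarrow> 'a) \<Rightarrow> (nat set \<Rightarrow> 'a)"
  by unfold_locales (auto simp: wscale_def fun_eq_iff algebra_simps)

definition supported_on :: "(nat set \<Rightarrow> bool) \<Rightarrow> (nat set \<Rightarrow> 'a::zero) set" where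
  "supported_on Q = {m. \<forall>S. m S \<noteq> 0 \<longrightarrow> Q S}"

text \<open>For \<open>m = x + e_j \<and> y\<close>, \<open>shift_map j i m = x + e_i \<and> y\<close> and \<open>proj_containing j m = e_j \<and> y\<close>;
  the slow shift of \<open>m\<close> is the first of these unless it vanishes, and then the second.\<close>

definition shift_map :: "nat \<Rightarrow> nat \<Rightarrow> (nat set \<Rightarrow> 'a::field) \<Rightarrow> nat set \<Rightarrow> 'a" where
  "shift_map j i m = (\<lambda>S. if j \<in> S then 0 else m S +
      (if i \<in> S then wsign i (S - {i}) * wsign j (S - {i}) * m (insert j (S - {i})) else 0))"

definition proj_containing :: "nat \<Rightarrow> (nat set \<Rightarrow> 'a::zero) \<Rightarrow> nat set \<Rightarrow> 'a" where
  "proj_containing j m = (\<lambda>S. if j \<in> S then m S else 0)"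

definition exchange_closed :: "nat \<Rightarrow> nat \<Rightarrow> (nat set \<Rightarrow> bool) \<Rightarrow> bool" where
  "exchange_closed j i Q \<longleftrightarrow> (\<forall>T. i \<notin> T \<longrightarrow> j \<notin> T \<longrightarrow> Q (insert j T) \<longrightarrow> Q (insert i T))"

lemma linear_shift_map:
  "Vector_Spaces.linear wscale wscale (shift_map j i :: (nat set \<Rightarrow> 'a::field) \<Rightarrow> _)"
  unfolding Vector_Spaces.linear_iff
  by (auto simp: vs.vector_space_axioms shift_map_def wscale_def fun_eq_iff algebra_simps)

lemma linear_proj_containing:
  "Vector_Spaces.linear wscale wscale (proj_containing j :: (nat set \<Rightarrow> 'a::field) \<Rightarrow> _)"
  unfolding Vector_Spaces.linear_iff
  by (auto simp: vs.vector_space_axioms proj_containing_def wscale_def fun_eq_iff)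

lemma subspace_supported_on: "vs.subspace (supported_on Q)"
  unfolding vs.subspace_def supported_on_def by (auto simp: wscale_def) (metis add_0)

lemma supported_on_Int: "supported_on Q \<inter> supported_on R = supported_on (\<lambda>S. Q S \<and> R S)"
  unfolding supported_on_def by auto

lemma supported_on_True [simp]: "supported_on (\<lambda>_. True) = UNIV"
  unfolding supported_on_def by auto

lemma supported_on_mono: "(\<And>S. Q S \<Longrightarrow> R S) \<Longrightarrow> supported_on Q \<subseteq> supported_on R"
  unfolding supported_on_def by auto

lemma shift_map_avoiding: "shift_map j i m \<in> supported_on (\<lambda>S. j \<notin> S)"
  unfolding shift_map_def supported_on_def by auto

lemma shift_map_eq_self: "m \<in> supported_on (\<lambda>S. j \<notin> S) \<Longrightarrow> shift_map j i m = m"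
  unfolding shift_map_def supported_on_def fun_eq_iff by auto

lemma shift_map_supported_on:
  assumes "exchange_closed j i Q" "m \<in> supported_on Q"
  shows "shift_map j i m \<in> supported_on Q"
  unfolding supported_on_def
proof (intro CollectI allI impI)
  fix S assume nz: "shift_map j i m S \<noteq> 0"
  then have "j \<notin> S" unfolding shift_map_def by auto
  show "Q S"
  proof (cases "m S = 0")
    case False
    then show ?thesis using assms(2) unfolding supported_on_def by auto
  next
    case True
    with \<open>j \<notin> S\<close> have "shift_map j i m S
        = (if i \<in> S then wsign i (S - {i}) * wsign j (S - {i}) * m (insert j (S - {i})) else 0)"
      by (simp add: shift_map_def)
    with nz have "i \<in> S" "m (insert j (S - {i})) \<noteq> 0" by (auto split: if_splits)
    then have "Q (insert j (S - {i}))" using assms(2) unfolding supported_on_def by blast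
    moreover have "i \<notin> S - {i}" "j \<notin> S - {i}" using \<open>j \<notin> S\<close> by auto
    ultimately have "Q (insert i (S - {i}))" using assms(1) unfolding exchange_closed_def by blast
    then show ?thesis using \<open>i \<in> S\<close> by (simp add: insert_absorb)
  qed
qed

lemma proj_containing_supported_on:
  "m \<in> supported_on Q \<Longrightarrow> proj_containing j m \<in> supported_on (\<lambda>S. Q S \<and> j \<in> S)"
  unfolding proj_containing_def supported_on_def by auto

lemma proj_containing_eq_self: "m \<in> supported_on (\<lambda>S. j \<in> S) \<Longrightarrow> proj_containing j m = m"
  unfolding proj_containing_def supported_on_def fun_eq_iff by auto

lemma proj_containing_idem [simp]: "proj_containing j (proj_containing j m) = proj_containing j m"
  unfolding proj_containing_def by auto

lemma proj_containing_eq_0_iff: "proj_containing j m = 0 \<longleftrightarrow> m \<in> supported_on (\<lambda>S. j \<notin> S)"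
  unfolding proj_containing_def supported_on_def fun_eq_iff by auto

lemma wedge_space_eq_supported_on: "wedge_space n k = supported_on (\<lambda>S. S \<subseteq> {1..n} \<and> card S = k)"
  unfolding wedge_space_def supported_on_def ..

lemma sum_apply: "(\<Sum>x\<in>A. f x) y = (\<Sum>x\<in>A. f x y)"
  by (induction A rule: infinite_finite_induct) auto

lemma finite_dim_wedge_space: "vs.finite_dim (wedge_space n k :: (nat set \<Rightarrow> 'a::field) set)"
proof -
  let ?A = "{S. S \<subseteq> {1..n} \<and> card S = k}"
  define e :: "nat set \<Rightarrow> nat set \<Rightarrow> 'a" where "e S = (\<lambda>T. if T = S then 1 else 0)" for S
  have "finite ?A" by (rule finite_subset[of _ "Pow {1..n}"]) auto
  have "m \<in> vs.span (e ` ?A)" if "m \<in> wedge_space n k" for m :: "nat set \<Rightarrow> 'a"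
  proof -
    have "(\<Sum>S\<in>?A. wscale (m S) (e S)) \<in> vs.span (e ` ?A)"
      by (intro vs.span_sum vs.span_scale vs.span_base) auto
    moreover have "m = (\<Sum>S\<in>?A. wscale (m S) (e S))"
    proof
      fix T
      have "(\<Sum>S\<in>?A. wscale (m S) (e S)) T = (\<Sum>S\<in>?A. m S * (if T = S then 1 else 0))"
        unfolding sum_apply by (simp add: wscale_def e_def)
      also have "\<dots> = (if T \<in> ?A then m T else 0)"
        using \<open>finite ?A\<close> by (simp add: if_distrib cong: if_cong)
      also have "\<dots> = m T" using that unfolding wedge_space_def by auto
      finally show "m T = (\<Sum>S\<in>?A. wscale (m S) (e S)) T" by simp
    qed
    ultimately show ?thesis by simp
  qed
  then have "wedge_space n k \<subseteq> vs.span (e ` ?A)" by blast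
  then show ?thesis unfolding vs.finite_dim_def using \<open>finite ?A\<close> by blast
qed

section \<open>The slow shift of a subspace\<close>

lemma slow_shift_elt_eq:
  "slow_shift_elt j i m = (if shift_map j i m \<noteq> 0 then shift_map j i m else proj_containing j m)"
  unfolding slow_shift_elt_def shift_map_def proj_containing_def Let_def zero_fun_def by simp

lemma slow_shift_eq_span:
  "slow_shift j i L = vs.span {slow_shift_elt j i m | m. m \<in> L \<and> m \<noteq> 0}"
  unfolding slow_shift_def by (simp only: zero_fun_def)

lemma subspace_slow_shift: "vs.subspace (slow_shift j i L)"
  unfolding slow_shift_eq_span by simp

lemma shift_map_mem_slow_shift: "m \<in> L \<Longrightarrow> shift_map j i m \<in> slow_shift j i L"
proof (cases "shift_map j i m = 0")
  case True
  then show ?thesis by (simp add: vs.span_zero slow_shift_eq_span)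
next
  case False
  moreover assume "m \<in> L"
  moreover have "m \<noteq> 0" using False by (auto simp: shift_map_def)
  ultimately show ?thesis
    unfolding slow_shift_eq_span by (intro vs.span_base) (auto simp: slow_shift_elt_eq)
qed

lemma proj_containing_mem_slow_shift:
  "m \<in> L \<Longrightarrow> shift_map j i m = 0 \<Longrightarrow> proj_containing j m \<in> slow_shift j i L"
proof (cases "m = 0")
  case True
  then have "proj_containing j m = 0" by (simp add: proj_containing_def fun_eq_iff)
  then show ?thesis using vs.subspace_0[OF subspace_slow_shift] by simp
next
  case False
  moreover assume "m \<in> L" "shift_map j i m = 0"
  ultimately show ?thesis
    unfolding slow_shift_eq_span by (intro vs.span_base) (auto simp: slow_shift_elt_eq)
qed

lemma slow_shift_subset:
  assumes "vs.subspace X" "shift_map j i ` L \<subseteq> X"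
    and "proj_containing j ` (L \<inter> {m. shift_map j i m = 0}) \<subseteq> X"
  shows "slow_shift j i L \<subseteq> X"
  unfolding slow_shift_eq_span
  using assms by (intro vs.span_minimal) (auto simp: slow_shift_elt_eq)

text \<open>\<open>proj_containing j\<close> kills the images of \<open>shift_map j i\<close> and fixes its own, so its preimage of
  the slow shift contains all generators.\<close>

lemma proj_containing_slow_shift:
  assumes "x \<in> slow_shift j i L"
  shows "proj_containing j x \<in> slow_shift j i L"
proof -
  interpret p: Vector_Spaces.linear wscale wscale "proj_containing j"
    by (rule linear_proj_containing)
  let ?X = "{x. proj_containing j x \<in> slow_shift j i L}"
  have proj_shift: "proj_containing j (shift_map j i m) = 0" for m :: "nat set \<Rightarrow> 'a"
    using proj_containing_eq_0_iff shift_map_avoiding by blast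
  have "vs.subspace ?X"
    using p.subspace_vimage[OF subspace_slow_shift] by (simp add: vimage_def)
  moreover have "shift_map j i ` L \<subseteq> ?X"
    using proj_shift vs.subspace_0[OF subspace_slow_shift] by auto
  moreover have "proj_containing j ` (L \<inter> {m. shift_map j i m = 0}) \<subseteq> ?X"
    using proj_containing_mem_slow_shift by auto
  ultimately have "slow_shift j i L \<subseteq> ?X" by (rule slow_shift_subset)
  then show ?thesis using assms by blast
qed

lemma finite_dim_slow_shift:
  assumes "vs.finite_dim L"
  shows "vs.finite_dim (slow_shift j i L)"
proof -
  let ?X = "vs.span (shift_map j i ` L \<union> proj_containing j ` L)"
  have "vs.finite_dim ?X"
    using vs.finite_dim_image[OF linear_shift_map assms]
      vs.finite_dim_image[OF linear_proj_containing assms]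
    by (intro vs.finite_dim_span vs.finite_dim_Un)
  moreover have "slow_shift j i L \<subseteq> ?X"
    by (rule slow_shift_subset) (auto intro: vs.span_base)
  ultimately show ?thesis using vs.finite_dim_subset by blast
qed

lemma slow_shift_wedge_space:
  assumes "L \<subseteq> wedge_space n k" "i \<in> {1..n}" "j \<in> {1..n}"
  shows "slow_shift j i L \<subseteq> wedge_space n k"
proof -
  let ?Q = "\<lambda>S. S \<subseteq> {1..n} \<and> card S = k"
  have "exchange_closed j i ?Q"
    unfolding exchange_closed_def using assms(2,3) finite_subset[of _ "{1..n}"] by auto
  then show ?thesis
    using assms(1) shift_map_supported_on proj_containing_supported_on[of _ ?Q j]
      supported_on_mono[of "\<lambda>S. ?Q S \<and> j \<in> S" ?Q]
    unfolding wedge_space_eq_supported_on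
    by (intro slow_shift_subset subspace_supported_on) blast+
qed

section \<open>Dimension estimates\<close>

lemma dim_supported_on_split:
  assumes "vs.subspace X" "vs.finite_dim X"
  shows "vs.dim (X \<inter> supported_on Q) = vs.dim (proj_containing j ` (X \<inter> supported_on Q))
    + vs.dim (X \<inter> supported_on (\<lambda>S. Q S \<and> j \<notin> S))"
proof -
  have kernel: "X \<inter> supported_on Q \<inter> {x. proj_containing j x = 0}
      = X \<inter> supported_on (\<lambda>S. Q S \<and> j \<notin> S)"
    by (auto simp: proj_containing_eq_0_iff supported_on_Int[symmetric])
  show ?thesis
    using vs.rank_nullity[OF linear_proj_containing[of j]
        vs.subspace_inter[OF assms(1) subspace_supported_on[of Q]]
        vs.finite_dim_subset[OF assms(2) Int_lower1]]
    unfolding kernel .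
qed

lemma proj_containing_image_if_closed:
  assumes "\<And>x. x \<in> X \<Longrightarrow> proj_containing j x \<in> X"
  shows "proj_containing j ` (X \<inter> supported_on Q) = X \<inter> supported_on (\<lambda>S. Q S \<and> j \<in> S)"
proof
  show "proj_containing j ` (X \<inter> supported_on Q) \<subseteq> X \<inter> supported_on (\<lambda>S. Q S \<and> j \<in> S)"
    using assms proj_containing_supported_on by blast
  show "X \<inter> supported_on (\<lambda>S. Q S \<and> j \<in> S) \<subseteq> proj_containing j ` (X \<inter> supported_on Q)"
  proof
    fix x assume x: "x \<in> X \<inter> supported_on (\<lambda>S. Q S \<and> j \<in> S)"
    then have "x \<in> supported_on Q" "x \<in> supported_on (\<lambda>S. j \<in> S)"
      by (auto simp: supported_on_def)
    then show "x \<in> proj_containing j ` (X \<inter> supported_on Q)"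
      using x proj_containing_eq_self by (metis IntD1 IntI image_eqI)
  qed
qed

text \<open>A vector killed by both maps has no monomial containing \<open>j\<close>, so \<open>shift_map j i\<close> fixes it.\<close>

lemma dim_proj_containing_shift_kernel:
  assumes "vs.subspace A" "vs.finite_dim A"
  shows "vs.dim (proj_containing j ` (A \<inter> {x. shift_map j i x = 0}))
    = vs.dim (A \<inter> {x. shift_map j i x = 0})"
proof (rule vs.dim_image_eq_of_trivial_kernel[OF linear_proj_containing])
  interpret shift: Vector_Spaces.linear wscale wscale "shift_map j i" by (rule linear_shift_map)
  show "vs.subspace (A \<inter> {x. shift_map j i x = 0})"
    by (rule vs.subspace_inter[OF assms(1) shift.subspace_kernel])
  show "vs.finite_dim (A \<inter> {x. shift_map j i x = 0})"
    by (rule vs.finite_dim_subset[OF assms(2) Int_lower1])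
  have "x = 0" if "shift_map j i x = 0" "proj_containing j x = 0" for x
    using that shift_map_eq_self[of x j i] by (simp add: proj_containing_eq_0_iff)
  then show "A \<inter> {x. shift_map j i x = 0} \<inter> {x. proj_containing j x = 0} \<subseteq> {0}" by blast
qed

text \<open>By rank-nullity for \<open>shift_map j i\<close>, \<open>L \<inter> V_Q\<close> splits into its image, which lies in the part
  of the slow shift avoiding \<open>j\<close>, and the kernel, whose projection onto the monomials containing
  \<open>j\<close> lies in the slow shift and is injective.\<close>

lemma dim_supported_on_le_slow_shift:
  assumes "vs.subspace L" "vs.finite_dim L" "exchange_closed j i Q"
  shows "vs.dim (L \<inter> supported_on Q) \<le> vs.dim (slow_shift j i L \<inter> supported_on Q)"
proof -
  let ?A = "L \<inter> supported_on Q"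
  let ?K = "?A \<inter> {x. shift_map j i x = 0}"
  let ?N = "slow_shift j i L"
  have sA: "vs.subspace ?A" by (rule vs.subspace_inter[OF assms(1) subspace_supported_on])
  have fA: "vs.finite_dim ?A" by (rule vs.finite_dim_subset[OF assms(2) Int_lower1])
  have fN: "vs.finite_dim ?N" by (rule finite_dim_slow_shift[OF assms(2)])
  have "vs.dim ?A = vs.dim (shift_map j i ` ?A) + vs.dim ?K"
    by (rule vs.rank_nullity[OF linear_shift_map sA fA])
  moreover have "vs.dim ?K = vs.dim (proj_containing j ` ?K)"
    by (rule dim_proj_containing_shift_kernel[OF sA fA, symmetric])
  moreover have "shift_map j i ` ?A \<subseteq> ?N \<inter> supported_on (\<lambda>S. Q S \<and> j \<notin> S)"
    using shift_map_mem_slow_shift shift_map_supported_on[OF assms(3)] shift_map_avoiding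
    by (auto simp: supported_on_Int[symmetric])
  then have "vs.dim (shift_map j i ` ?A) \<le> vs.dim (?N \<inter> supported_on (\<lambda>S. Q S \<and> j \<notin> S))"
    using vs.dim_mono_finite_dim vs.finite_dim_subset[OF fN Int_lower1] by blast
  moreover have "proj_containing j ` ?K \<subseteq> proj_containing j ` (?N \<inter> supported_on Q)"
  proof
    fix y assume "y \<in> proj_containing j ` ?K"
    then obtain x where x: "x \<in> ?K" "y = proj_containing j x" by blast
    then have "y \<in> ?N \<inter> supported_on Q"
      using proj_containing_mem_slow_shift proj_containing_supported_on supported_on_Int by blast
    then show "y \<in> proj_containing j ` (?N \<inter> supported_on Q)"
      using x(2) proj_containing_idem by (metis image_eqI)
  qed
  then have "vs.dim (proj_containing j ` ?K) \<le> vs.dim (proj_containing j ` (?N \<inter> supported_on Q))"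
    using vs.dim_mono_finite_dim vs.finite_dim_image[OF linear_proj_containing]
      vs.finite_dim_subset[OF fN Int_lower1] by blast
  ultimately show ?thesis
    using dim_supported_on_split[OF subspace_slow_shift fN, of Q j] by linarith
qed

lemma dim_avoiding_sum_le:
  assumes "vs.subspace L" "vs.finite_dim L"
  shows "vs.dim (L \<inter> supported_on (\<lambda>S. i \<notin> S)) + vs.dim (L \<inter> supported_on (\<lambda>S. j \<notin> S))
    \<le> vs.dim (L \<inter> supported_on (\<lambda>S. \<not> (i \<in> S \<and> j \<in> S)))
      + vs.dim (L \<inter> supported_on (\<lambda>S. i \<notin> S \<and> j \<notin> S))"
proof -
  let ?Z = "L \<inter> supported_on (\<lambda>S. \<not> (i \<in> S \<and> j \<in> S))"
  have "proj_containing j ` (L \<inter> supported_on (\<lambda>S. i \<notin> S)) \<subseteq> proj_containing j ` ?Z"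
    using supported_on_mono[of "\<lambda>S. i \<notin> S" "\<lambda>S. \<not> (i \<in> S \<and> j \<in> S)"] by blast
  then have "vs.dim (proj_containing j ` (L \<inter> supported_on (\<lambda>S. i \<notin> S)))
      \<le> vs.dim (proj_containing j ` ?Z)"
    using vs.dim_mono_finite_dim vs.finite_dim_image[OF linear_proj_containing]
      vs.finite_dim_subset[OF assms(2) Int_lower1] by blast
  moreover have "(\<lambda>S. \<not> (i \<in> S \<and> j \<in> S) \<and> j \<notin> S) = (\<lambda>S. j \<notin> S)" by auto
  ultimately show ?thesis
    using dim_supported_on_split[OF assms, of "\<lambda>S. i \<notin> S" j]
      dim_supported_on_split[OF assms, of "\<lambda>S. \<not> (i \<in> S \<and> j \<in> S)" j]
    by simp
qed

lemma dim_avoiding_sum_eq_if_closed: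
  assumes "vs.subspace N" "vs.finite_dim N" "\<And>x. x \<in> N \<Longrightarrow> proj_containing j x \<in> N"
  shows "vs.dim (N \<inter> supported_on (\<lambda>S. i \<notin> S)) + vs.dim (N \<inter> supported_on (\<lambda>S. j \<notin> S))
    = vs.dim (N \<inter> supported_on (\<lambda>S. \<not> (i \<in> S \<and> j \<in> S)))
      + vs.dim (N \<inter> supported_on (\<lambda>S. i \<notin> S \<and> j \<notin> S))"
proof -
  have "(\<lambda>S. \<not> (i \<in> S \<and> j \<in> S) \<and> j \<notin> S) = (\<lambda>S. j \<notin> S)"
    and "(\<lambda>S. \<not> (i \<in> S \<and> j \<in> S) \<and> j \<in> S) = (\<lambda>S. i \<notin> S \<and> j \<in> S)" by auto
  then show ?thesis
    using dim_supported_on_split[OF assms(1,2), of "\<lambda>S. i \<notin> S" j]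
      dim_supported_on_split[OF assms(1,2), of "\<lambda>S. \<not> (i \<in> S \<and> j \<in> S)" j]
      proj_containing_image_if_closed[OF assms(3)]
    by simp
qed

definition dim_avoiding :: "nat \<Rightarrow> (nat set \<Rightarrow> 'a::field) set \<Rightarrow> nat" where
  "dim_avoiding h X = vs.dim (X \<inter> supported_on (\<lambda>S. h \<notin> S))"

definition dim_containing :: "nat \<Rightarrow> (nat set \<Rightarrow> 'a::field) set \<Rightarrow> nat" where
  "dim_containing h X = vs.dim (X \<inter> supported_on (\<lambda>S. h \<in> S))"

lemma shift_map_image_eq_if_dim_le:
  assumes "vs.subspace L" "vs.finite_dim L"
    and "dim_avoiding j (slow_shift j i L) \<le> dim_avoiding j L"
  shows "shift_map j i ` L = L \<inter> supported_on (\<lambda>S. j \<notin> S)"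
proof (rule sym, rule vs.subspace_eq_if_dim_le)
  show "vs.subspace (L \<inter> supported_on (\<lambda>S. j \<notin> S))"
    by (rule vs.subspace_inter[OF assms(1) subspace_supported_on])
  show "L \<inter> supported_on (\<lambda>S. j \<notin> S) \<subseteq> shift_map j i ` L"
    by (auto intro: image_eqI[OF shift_map_eq_self[symmetric]])
  show "vs.finite_dim (shift_map j i ` L)"
    by (rule vs.finite_dim_image[OF linear_shift_map assms(2)])
  have "shift_map j i ` L \<subseteq> slow_shift j i L \<inter> supported_on (\<lambda>S. j \<notin> S)"
    using shift_map_mem_slow_shift shift_map_avoiding by blast
  then have "vs.dim (shift_map j i ` L) \<le> vs.dim (slow_shift j i L \<inter> supported_on (\<lambda>S. j \<notin> S))"
    using vs.dim_mono_finite_dim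
      vs.finite_dim_subset[OF finite_dim_slow_shift[OF assms(2)] Int_lower1]
    by blast
  then show "vs.dim (shift_map j i ` L) \<le> vs.dim (L \<inter> supported_on (\<lambda>S. j \<notin> S))"
    using assms(3) unfolding dim_avoiding_def by linarith
qed

lemma proj_containing_image_eq_if_dims_le:
  assumes "vs.subspace L" "vs.finite_dim L"
    and "dim_avoiding j (slow_shift j i L) \<le> dim_avoiding j L"
    and "dim_containing j (slow_shift j i L) \<le> dim_containing j L"
  shows "proj_containing j ` L = L \<inter> supported_on (\<lambda>S. j \<in> S)"
proof (rule sym, rule vs.subspace_eq_if_dim_le)
  let ?N = "slow_shift j i L"
  let ?K = "L \<inter> {x. shift_map j i x = 0}"
  show "vs.subspace (L \<inter> supported_on (\<lambda>S. j \<in> S))"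
    by (rule vs.subspace_inter[OF assms(1) subspace_supported_on])
  show "L \<inter> supported_on (\<lambda>S. j \<in> S) \<subseteq> proj_containing j ` L"
    by (auto intro: image_eqI[OF proj_containing_eq_self[symmetric]])
  show "vs.finite_dim (proj_containing j ` L)"
    by (rule vs.finite_dim_image[OF linear_proj_containing assms(2)])
  have "vs.dim L = vs.dim (proj_containing j ` L) + vs.dim (L \<inter> supported_on (\<lambda>S. j \<notin> S))"
    using dim_supported_on_split[OF assms(1,2), of "\<lambda>_. True" j] by simp
  moreover have "vs.dim L = vs.dim (shift_map j i ` L) + vs.dim ?K"
    by (rule vs.rank_nullity[OF linear_shift_map assms(1,2)])
  moreover have "vs.dim ?K = vs.dim (proj_containing j ` ?K)"
    by (rule dim_proj_containing_shift_kernel[OF assms(1,2), symmetric])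
  moreover have "proj_containing j ` ?K \<subseteq> ?N \<inter> supported_on (\<lambda>S. j \<in> S)"
    using proj_containing_mem_slow_shift proj_containing_supported_on[of _ "\<lambda>_. True"] by auto
  then have "vs.dim (proj_containing j ` ?K) \<le> vs.dim (?N \<inter> supported_on (\<lambda>S. j \<in> S))"
    using vs.dim_mono_finite_dim
      vs.finite_dim_subset[OF finite_dim_slow_shift[OF assms(2)] Int_lower1]
    by blast
  ultimately show "vs.dim (proj_containing j ` L) \<le> vs.dim (L \<inter> supported_on (\<lambda>S. j \<in> S))"
    using assms(4) unfolding shift_map_image_eq_if_dim_le[OF assms(1-3)] dim_containing_def
    by linarith
qed

lemma slow_shift_eq_if_dims_le:
  assumes "vs.subspace L" "vs.finite_dim L"
    and "dim_avoiding j (slow_shift j i L) \<le> dim_avoiding j L"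
    and "dim_containing j (slow_shift j i L) \<le> dim_containing j L"
  shows "slow_shift j i L = L"
proof (rule vs.subspace_eq_if_dim_le[OF subspace_slow_shift _ assms(2)])
  show "slow_shift j i L \<subseteq> L"
    using shift_map_image_eq_if_dim_le[OF assms(1-3)] proj_containing_image_eq_if_dims_le[OF assms]
    by (intro slow_shift_subset[OF assms(1)]) auto
  show "vs.dim L \<le> vs.dim (slow_shift j i L)"
    using dim_supported_on_le_slow_shift[OF assms(1,2), of j i "\<lambda>_. True"]
    by (simp add: exchange_closed_def)
qed

section \<open>A potential increased by every non-fixing slow shift\<close>

lemma weighted_sum_le:
  fixes a b :: "nat \<Rightarrow> nat"
  assumes "finite H" "i \<in> H" "j \<in> H" "i < j"
    and "\<And>h. h \<in> H \<Longrightarrow> h \<noteq> i \<Longrightarrow> a h \<le> b h" and "a i + a j \<le> b i + b j"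
  shows "(\<Sum>h\<in>H. h * a h) + (j - i) * (b j - a j) \<le> (\<Sum>h\<in>H. h * b h)"
proof -
  let ?R = "H - {i} - {j}"
  have split: "(\<Sum>h\<in>H. f h) = f i + (f j + (\<Sum>h\<in>?R. f h))" for f :: "nat \<Rightarrow> nat"
    using assms(1-4) sum.remove[OF assms(1,2), of f] sum.remove[of "H - {i}" j f] by simp
  have rest: "(\<Sum>h\<in>?R. h * a h) \<le> (\<Sum>h\<in>?R. h * b h)" by (rule sum_mono) (simp add: assms(5))
  define d where "d = j - i"
  obtain e where e: "b j = a j + e" using assms(3-5) le_Suc_ex by force
  have "i * a i \<le> i * (b i + e)" using assms(6) e by simp
  moreover have "j * e = i * e + d * e" using assms(4) by (simp add: d_def algebra_simps)
  ultimately have "i * a i + j * a j + d * e \<le> i * b i + j * a j + j * e"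
    by (simp add: algebra_simps)
  moreover have "(j - i) * (b j - a j) = d * e" "j * b j = j * a j + j * e"
    by (simp_all add: d_def e algebra_simps)
  ultimately have "i * a i + j * a j + (j - i) * (b j - a j) \<le> i * b i + j * b j" by linarith
  then show ?thesis using rest split[of "\<lambda>h. h * a h"] split[of "\<lambda>h. h * b h"] by linarith
qed

lemma sum_le_add_of_le_except:
  fixes f g :: "'b \<Rightarrow> nat"
  assumes "finite H" "\<And>h. h \<in> H \<Longrightarrow> h \<noteq> j \<Longrightarrow> f h \<le> g h"
  shows "(\<Sum>h\<in>H. f h) \<le> f j + (\<Sum>h\<in>H. g h)"
proof -
  have "(\<Sum>h\<in>H. f h) \<le> f j + (\<Sum>h\<in>H - {j}. f h)"
    using sum.remove[OF assms(1), of j f] by (cases "j \<in> H") auto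
  also have "(\<Sum>h\<in>H - {j}. f h) \<le> (\<Sum>h\<in>H - {j}. g h)" by (rule sum_mono) (simp add: assms(2))
  also have "\<dots> \<le> (\<Sum>h\<in>H. g h)" by (rule sum_mono2[OF assms(1)]) auto
  finally show ?thesis by simp
qed

text \<open>With \<open>c\<close> larger than every \<open>dim_containing\<close>, the potential orders subspaces
  lexicographically by the two sums.\<close>

definition shift_potential :: "nat \<Rightarrow> nat \<Rightarrow> (nat set \<Rightarrow> 'a::field) set \<Rightarrow> nat" where
  "shift_potential c n X = c * (\<Sum>h\<in>{1..n}. h * dim_avoiding h X) + (\<Sum>h\<in>{1..n}. dim_containing h X)"

lemma dim_avoiding_sum_le_slow_shift:
  assumes "vs.subspace L" "vs.finite_dim L" "i \<noteq> j"
  shows "dim_avoiding i L + dim_avoiding j L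
    \<le> dim_avoiding i (slow_shift j i L) + dim_avoiding j (slow_shift j i L)"
proof -
  let ?N = "slow_shift j i L"
  let ?Z = "\<lambda>S. \<not> (i \<in> S \<and> j \<in> S)" and ?U = "\<lambda>S. i \<notin> S \<and> j \<notin> S"
  have "exchange_closed j i ?Z" "exchange_closed j i ?U"
    using assms(3) by (auto simp: exchange_closed_def)
  then have "vs.dim (L \<inter> supported_on ?Z) + vs.dim (L \<inter> supported_on ?U)
      \<le> vs.dim (?N \<inter> supported_on ?Z) + vs.dim (?N \<inter> supported_on ?U)"
    using dim_supported_on_le_slow_shift[OF assms(1,2)] by (simp add: add_mono)
  moreover have "vs.dim (?N \<inter> supported_on ?Z) + vs.dim (?N \<inter> supported_on ?U)
      = dim_avoiding i ?N + dim_avoiding j ?N"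
    unfolding dim_avoiding_def
    by (rule dim_avoiding_sum_eq_if_closed[OF subspace_slow_shift finite_dim_slow_shift[OF assms(2)]
        proj_containing_slow_shift, symmetric])
  ultimately show ?thesis
    using dim_avoiding_sum_le[OF assms(1,2), of i j] unfolding dim_avoiding_def by linarith
qed

lemma shift_potential_less_slow_shift:
  assumes "vs.subspace L" "L \<subseteq> W" "vs.finite_dim W" "vs.dim W < c"
    and "i \<in> {1..n}" "j \<in> {1..n}" "i < j" "slow_shift j i L \<noteq> L"
  shows "shift_potential c n L < shift_potential c n (slow_shift j i L)"
proof -
  let ?N = "slow_shift j i L"
  let ?A = "\<lambda>X. \<Sum>h\<in>{1..n}. h * dim_avoiding h X" and ?D = "\<lambda>X. \<Sum>h\<in>{1..n}. dim_containing h X"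
  have L: "vs.subspace L" "vs.finite_dim L" using assms(1-3) vs.finite_dim_subset by blast+
  have "dim_avoiding h L \<le> dim_avoiding h ?N" if "h \<noteq> i" for h
    unfolding dim_avoiding_def using that
    by (intro dim_supported_on_le_slow_shift[OF L]) (auto simp: exchange_closed_def)
  then have weighted: "?A L + (j - i) * (dim_avoiding j ?N - dim_avoiding j L) \<le> ?A ?N"
    using assms(5-7) dim_avoiding_sum_le_slow_shift[OF L] by (intro weighted_sum_le) auto
  have containing: "dim_containing h L \<le> dim_containing h ?N" if "h \<noteq> j" for h
    unfolding dim_containing_def using that
    by (intro dim_supported_on_le_slow_shift[OF L]) (auto simp: exchange_closed_def)
  show ?thesis
  proof (cases "dim_avoiding j L < dim_avoiding j ?N")
    case True
    then have "0 < (j - i) * (dim_avoiding j ?N - dim_avoiding j L)" using assms(7) by simp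
    then have "?A L < ?A ?N" using weighted by linarith
    then have "c * ?A L + c \<le> c * ?A ?N" by (metis Suc_leI mult_Suc_right mult_le_mono2 add.commute)
    moreover have "?D L \<le> dim_containing j L + ?D ?N"
      using containing by (intro sum_le_add_of_le_except) auto
    moreover have "dim_containing j L \<le> vs.dim W"
      unfolding dim_containing_def using assms(2,3) by (intro vs.dim_mono_finite_dim) auto
    ultimately show ?thesis using assms(4) unfolding shift_potential_def by linarith
  next
    case False
    then have "\<not> dim_containing j ?N \<le> dim_containing j L"
      using slow_shift_eq_if_dims_le[OF L] assms(8) by (meson not_less)
    then have "dim_containing j L < dim_containing j ?N" by simp
    moreover have "dim_containing h L \<le> dim_containing h ?N" for h
      using calculation containing by (cases "h = j") auto
    ultimately have "?D L < ?D ?N" using assms(6) by (intro sum_strict_mono_ex1) auto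
    moreover have "c * ?A L \<le> c * ?A ?N" using weighted by simp
    ultimately show ?thesis unfolding shift_potential_def by linarith
  qed
qed

lemma shift_potential_mono:
  assumes "X \<subseteq> W" "vs.finite_dim W"
  shows "shift_potential c n X \<le> shift_potential c n W"
proof -
  have "vs.dim (X \<inter> supported_on Q) \<le> vs.dim (W \<inter> supported_on Q)" for Q
    using assms vs.dim_mono_finite_dim vs.finite_dim_subset[OF assms(2) Int_lower1]
    by (meson Int_mono order_refl)
  then show ?thesis
    unfolding shift_potential_def dim_avoiding_def dim_containing_def
    by (intro add_mono mult_le_mono2 sum_mono) simp_all
qed

theorem theorem3p9:
  fixes n k :: nat and L :: "(nat set \<Rightarrow> 'a::field) set" and I :: "nat set"
  assumes char: "(2::'a) \<noteq> 0"
    and subsp: "module.subspace wscale L"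
    and amb: "L \<subseteq> wedge_space n k"
    and I: "I \<subseteq> {1..n}"
  shows "\<not> (\<exists>Ls :: nat \<Rightarrow> (nat set \<Rightarrow> 'a) set.
            Ls 0 = L \<and>
            (\<forall>s. \<exists>i\<in>I. \<exists>j\<in>I. i < j \<and> Ls (Suc s) = slow_shift j i (Ls s) \<and> Ls (Suc s) \<noteq> Ls s))"
proof (intro notI, elim exE conjE)
  fix Ls :: "nat \<Rightarrow> (nat set \<Rightarrow> 'a) set"
  assume L0: "Ls 0 = L"
    and step: "\<forall>s. \<exists>i\<in>I. \<exists>j\<in>I. i < j \<and> Ls (Suc s) = slow_shift j i (Ls s) \<and> Ls (Suc s) \<noteq> Ls s"
  let ?W = "wedge_space n k :: (nat set \<Rightarrow> 'a) set"
  define \<Phi> :: "(nat set \<Rightarrow> 'a) set \<Rightarrow> nat" where "\<Phi> X = shift_potential (Suc (vs.dim ?W)) n X" for X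
  have Ls: "vs.subspace (Ls s) \<and> Ls s \<subseteq> ?W" for s
  proof (induction s)
    case 0
    show ?case using L0 subsp amb by simp
  next
    case (Suc s)
    obtain i j where "i \<in> I" "j \<in> I" and next_eq: "Ls (Suc s) = slow_shift j i (Ls s)"
      using step by blast
    then have "slow_shift j i (Ls s) \<subseteq> ?W" using Suc.IH I by (intro slow_shift_wedge_space) auto
    then show ?case unfolding next_eq using subspace_slow_shift by simp
  qed
  have "\<Phi> (Ls s) < \<Phi> (Ls (Suc s))" for s
  proof -
    obtain i j where "i \<in> I" "j \<in> I" "i < j" "Ls (Suc s) \<noteq> Ls s"
      and next_eq: "Ls (Suc s) = slow_shift j i (Ls s)"
      using step by blast
    then show ?thesis
      using Ls[of s] I unfolding \<Phi>_def next_eq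
      by (intro shift_potential_less_slow_shift[OF _ _ finite_dim_wedge_space]) auto
  qed
  then have "s \<le> \<Phi> (Ls s)" for s
    by (intro strict_mono_imp_increasing) (simp add: strict_mono_Suc_iff)
  moreover have "\<Phi> (Ls s) \<le> \<Phi> ?W" for s
    using Ls[of s] finite_dim_wedge_space unfolding \<Phi>_def by (intro shift_potential_mono) simp_all
  ultimately show False using le_trans not_less_eq_eq by blast
qed

end
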